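(* Let $a\geq 1$ and $b\geq 2$ be integers. Then for Lebesgue-almost every $x\in A$ we have $\lim_{k\to\infty}T_{a,b}^k(x)\neq(0,\ldots,0)$.
   Context: For $n\geq 1$ let $\Lambda^n=\{x\in\mathbb{R}^n : 0\leq x_1\leq\cdots\leq x_n\}$. For integers $a,b\geq 1$ the map $T_{a,b}:\Lambda^{a+b}\to\Lambda^{a+b}$ sends $x$ to the vector obtained by arranging $x_1,\ldots,x_a,\,x_{a+1}-x_a,\ldots,x_{a+b}-x_a$ in nondecreasing order (each coordinate sequence of the orbit is nonincreasing, so the limit exists). $A=\{x\in\Lambda^{a+b}: x_1+\cdots+x_{a+b}\leq b\,x_{a+b}\}$. *)

theory Defs
  imports "HOL-Analysis.Analysis"
begin

text \<open>Points of R^n are represented as extensional functions nat => real on the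
index set {..<n} (0-based: coordinate x_i of the paper is x (i-1)).
Lebesgue measure on R^n is the product measure PiM {..<n} (%_. lborel).\<close>

definition Lambda :: "nat \<Rightarrow> (nat \<Rightarrow> real) set" where
  "Lambda n = {x \<in> PiE {..<n} (\<lambda>_. UNIV).
      0 \<le> x 0 \<and> (\<forall>i. Suc i < n \<longrightarrow> x i \<le> x (Suc i))}"

definition T_list :: "nat \<Rightarrow> nat \<Rightarrow> (nat \<Rightarrow> real) \<Rightarrow> real list" where
  "T_list a b x = map x [0..<a] @ map (\<lambda>i. x i - x (a - 1)) [a..<a+b]"

definition T :: "nat \<Rightarrow> nat \<Rightarrow> (nat \<Rightarrow> real) \<Rightarrow> (nat \<Rightarrow> real)" where
  "T a b x = (\<lambda>i. if i < a + b then sort (T_list a b x) ! i else undefined)"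

definition A_set :: "nat \<Rightarrow> nat \<Rightarrow> (nat \<Rightarrow> real) set" where
  "A_set a b = {x \<in> Lambda (a + b). (\<Sum>i<a+b. x i) \<le> real b * x (a + b - 1)}"

end

theory Submission imports Defs begin

text \<open>Subtracting the nonnegative number \<open>x\<^sub>a\<close> from some entries of a sorted vector
  and re-sorting can only decrease every coordinate, so each coordinate sequence of an orbit
  of \<open>T\<^sub>a\<^sub>,\<^sub>b\<close> is nonincreasing and bounded below by \<open>0\<close>, hence convergent.
  Along the orbit the functional \<open>\<Phi>(x) = b x\<^sub>a\<^sub>+\<^sub>b - (x\<^sub>1 + \<dots> + x\<^sub>a\<^sub>+\<^sub>b)\<close> does not decrease:
  one step lowers the coordinate sum by exactly \<open>b x\<^sub>a\<close>, while the new maximum is at least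
  \<open>x\<^sub>a\<^sub>+\<^sub>b - x\<^sub>a\<close>. Since \<open>\<Phi>\<close> vanishes at the origin, every \<open>x \<in> A\<close> with \<open>\<Phi>(x) > 0\<close> has a
  nonzero limit. The remaining points of \<open>A\<close> lie on the hyperplane \<open>\<Phi> = 0\<close>, which is a
  Lebesgue null set because the coefficient \<open>b - 1\<close> of \<open>x\<^sub>a\<^sub>+\<^sub>b\<close> is nonzero.\<close>

lemma sorted_nth_le_if_less_length_filter:
  fixes zs :: "'a::linorder list"
  assumes "sorted zs" and "i < length (filter (\<lambda>z. z \<le> c) zs)"
  shows "zs ! i \<le> c"
proof (rule ccontr)
  assume "\<not> zs ! i \<le> c"
  with \<open>sorted zs\<close> have "{j. j < length zs \<and> zs ! j \<le> c} \<subseteq> {..<i}"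
    by (auto simp: sorted_iff_nth_mono) (meson leI order.trans sorted_iff_nth_mono)
  then have "card {j. j < length zs \<and> zs ! j \<le> c} \<le> i"
    by (metis card_lessThan card_mono finite_lessThan)
  with assms(2) show False by (simp add: length_filter_conv_card)
qed

lemma less_length_filter_if_sorted_nth_le:
  fixes zs :: "'a::linorder list"
  assumes "sorted zs" and "i < length zs" and "zs ! i \<le> c"
  shows "i < length (filter (\<lambda>z. z \<le> c) zs)"
proof -
  have "{..i} \<subseteq> {j. j < length zs \<and> zs ! j \<le> c}"
    using assms by (auto simp: sorted_iff_nth_mono) (meson order.trans)
  then have "card {..i} \<le> card {j. j < length zs \<and> zs ! j \<le> c}"
    by (intro card_mono) auto
  then show ?thesis by (simp add: length_filter_conv_card)
qed

lemma length_filter_sort: "length (filter P (sort xs)) = length (filter P xs)"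
  by (metis mset_filter mset_sort size_mset)

text \<open>Count, for \<open>c = sort xs ! i\<close>, the entries \<open>\<le> c\<close> in both lists.\<close>

lemma sort_nth_le_sort_nth:
  fixes xs ys :: "'a::linorder list"
  assumes "length ys = length xs" and le: "\<And>j. j < length xs \<Longrightarrow> ys ! j \<le> xs ! j"
    and "i < length xs"
  shows "sort ys ! i \<le> sort xs ! i"
proof -
  let ?c = "sort xs ! i"
  have "{j. j < length xs \<and> xs ! j \<le> ?c} \<subseteq> {j. j < length ys \<and> ys ! j \<le> ?c}"
    using assms by (auto intro: order.trans)
  then have count_le: "length (filter (\<lambda>z. z \<le> ?c) xs) \<le> length (filter (\<lambda>z. z \<le> ?c) ys)"
    by (simp add: length_filter_conv_card card_mono)
  have "i < length (filter (\<lambda>z. z \<le> ?c) (sort xs))"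
    using assms(3) by (intro less_length_filter_if_sorted_nth_le) auto
  also have "\<dots> \<le> length (filter (\<lambda>z. z \<le> ?c) (sort ys))"
    using count_le by (simp add: length_filter_sort)
  finally show ?thesis
    by (intro sorted_nth_le_if_less_length_filter) auto
qed

lemma Lambda_mono:
  assumes "x \<in> Lambda n" and "i \<le> j" and "j < n"
  shows "x i \<le> x j"
  using assms(2,3)
proof (induction j rule: dec_induct)
  case (step k)
  with assms(1) have "x k \<le> x (Suc k)" by (auto simp: Lambda_def)
  with step show ?case by simp
qed simp

lemma Lambda_nonneg: "x \<in> Lambda n \<Longrightarrow> i < n \<Longrightarrow> 0 \<le> x i"
  using Lambda_mono[of x n 0 i] by (auto simp: Lambda_def)

lemma length_T_list [simp]: "length (T_list a b x) = a + b"
  by (simp add: T_list_def)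

lemma T_list_nth:
  "j < a + b \<Longrightarrow> T_list a b x ! j = (if j < a then x j else x j - x (a - 1))"
  by (simp add: T_list_def nth_append)

lemma T_list_nonneg:
  assumes "1 \<le> a" and "x \<in> Lambda (a + b)" and "z \<in> set (T_list a b x)"
  shows "0 \<le> z"
proof -
  from assms(3) obtain j where j: "j < a + b" "z = T_list a b x ! j"
    by (auto simp: in_set_conv_nth)
  then show ?thesis
    using assms Lambda_nonneg[of x "a + b" j] Lambda_mono[of x "a + b" "a - 1" j]
    by (cases "j < a") (auto simp: T_list_nth)
qed

lemma T_in_Lambda:
  assumes "1 \<le> a" and "x \<in> Lambda (a + b)"
  shows "T a b x \<in> Lambda (a + b)"
proof -
  let ?l = "sort (T_list a b x)"
  have "?l ! 0 \<in> set (T_list a b x)"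
    using assms(1) by (metis add_gr_0 length_T_list length_sort less_le_trans nth_mem
        set_sort zero_less_one)
  then have "0 \<le> T a b x 0"
    using T_list_nonneg[OF assms] assms(1) by (simp add: T_def)
  moreover have "\<forall>i. Suc i < a + b \<longrightarrow> T a b x i \<le> T a b x (Suc i)"
    by (auto simp: T_def intro: sorted_nth_mono)
  moreover have "T a b x \<in> PiE {..<a + b} (\<lambda>_. UNIV)"
    by (auto simp: T_def PiE_iff extensional_def)
  ultimately show ?thesis by (simp add: Lambda_def)
qed

lemma T_le:
  assumes "1 \<le> a" and x: "x \<in> Lambda (a + b)" and "i < a + b"
  shows "T a b x i \<le> x i"
proof -
  have "sort (T_list a b x) ! i \<le> sort (map x [0..<a + b]) ! i"
    using assms Lambda_nonneg[OF x, of "a - 1"]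
    by (intro sort_nth_le_sort_nth) (auto simp: T_list_nth)
  also have "sort (map x [0..<a + b]) = map x [0..<a + b]"
    using Lambda_mono[OF x] by (intro sorted_sort_id) (auto simp: sorted_iff_nth_mono)
  finally show ?thesis using assms(3) by (simp add: T_def)
qed

lemma sum_T:
  assumes "1 \<le> a"
  shows "(\<Sum>i<a + b. T a b x i) = (\<Sum>i<a + b. x i) - real b * x (a - 1)"
proof -
  have "(\<Sum>i<a + b. T a b x i) = sum_list (sort (T_list a b x))"
    by (simp add: T_def sum_list_sum_nth atLeast0LessThan)
  also have "\<dots> = sum_list (T_list a b x)"
    by (metis mset_sort sum_mset_sum_list)
  also have "\<dots> = (\<Sum>i<a. x i) + (\<Sum>i\<in>{a..<a + b}. x i) - real b * x (a - 1)"
    by (simp add: T_list_def sum_set_upt_conv_sum_list_nat[symmetric] atLeast0LessThan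
        sum_subtractf)
  also have "(\<Sum>i<a. x i) + (\<Sum>i\<in>{a..<a + b}. x i) = (\<Sum>i<a + b. x i)"
    by (metis atLeast0LessThan le_add1 sum.atLeastLessThan_concat zero_le)
  finally show ?thesis .
qed

lemma T_last_ge:
  assumes "1 \<le> a" and "1 \<le> b"
  shows "x (a + b - 1) - x (a - 1) \<le> T a b x (a + b - 1)"
proof -
  let ?l = "sort (T_list a b x)"
  have "x (a + b - 1) - x (a - 1) \<in> set ?l"
    using assms by (auto simp: T_list_def)
  then obtain j where "j < a + b" "?l ! j = x (a + b - 1) - x (a - 1)"
    by (metis in_set_conv_nth length_T_list length_sort)
  moreover have "?l ! j \<le> ?l ! (a + b - 1)"
    using \<open>j < a + b\<close> assms by (intro sorted_nth_mono) auto
  ultimately show ?thesis using assms by (simp add: T_def)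
qed

definition Phi :: "nat \<Rightarrow> nat \<Rightarrow> (nat \<Rightarrow> real) \<Rightarrow> real" where
  "Phi a b x = real b * x (a + b - 1) - (\<Sum>i<a + b. x i)"

lemma A_set_iff_Phi_nonneg: "x \<in> A_set a b \<longleftrightarrow> x \<in> Lambda (a + b) \<and> 0 \<le> Phi a b x"
  by (auto simp: A_set_def Phi_def)

lemma Phi_le_Phi_T:
  assumes "1 \<le> a" and "1 \<le> b"
  shows "Phi a b x \<le> Phi a b (T a b x)"
proof -
  have "real b * (x (a + b - 1) - x (a - 1)) \<le> real b * T a b x (a + b - 1)"
    using T_last_ge[OF assms] by (intro mult_left_mono) auto
  then show ?thesis unfolding Phi_def sum_T[OF assms(1)] by (simp add: algebra_simps)
qed

lemma orbit_converges:
  assumes "1 \<le> a" and "x \<in> Lambda (a + b)"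
  obtains L where "\<And>i. i < a + b \<Longrightarrow> (\<lambda>k. (T a b ^^ k) x i) \<longlonglongrightarrow> L i"
proof -
  have orbit: "(T a b ^^ k) x \<in> Lambda (a + b)" for k
    by (induction k) (simp_all add: assms(2) T_in_Lambda[OF assms(1)])
  have "\<exists>l. (\<lambda>k. (T a b ^^ k) x i) \<longlonglongrightarrow> l" if "i < a + b" for i
  proof -
    have "decseq (\<lambda>k. (T a b ^^ k) x i)"
      by (rule decseq_SucI) (simp add: T_le[OF assms(1) orbit that])
    moreover have "\<forall>k. 0 \<le> (T a b ^^ k) x i"
      using Lambda_nonneg[OF orbit that] by blast
    ultimately show ?thesis by (metis decseq_convergent)
  qed
  then show ?thesis using that by metis
qed

lemma orbit_limit_nonzero:
  assumes "1 \<le> a" and "1 \<le> b" and "0 < Phi a b x"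
    and L: "\<And>i. i < a + b \<Longrightarrow> (\<lambda>k. (T a b ^^ k) x i) \<longlonglongrightarrow> L i"
  shows "\<exists>i<a + b. L i \<noteq> 0"
proof (rule ccontr)
  assume "\<not> (\<exists>i<a + b. L i \<noteq> 0)"
  then have "Phi a b L = 0"
    using assms(1) by (simp add: Phi_def)
  have "Phi a b x \<le> Phi a b ((T a b ^^ k) x)" for k
    by (induction k) (auto intro: order.trans Phi_le_Phi_T[OF assms(1,2)])
  moreover have "(\<lambda>k. Phi a b ((T a b ^^ k) x)) \<longlonglongrightarrow> Phi a b L"
    unfolding Phi_def using assms(1,2) by (intro tendsto_intros L) auto
  ultimately have "Phi a b x \<le> Phi a b L"
    by (intro LIMSEQ_le_const) auto
  with \<open>Phi a b L = 0\<close> assms(3) show False by simp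
qed

lemma hyperplane_null_sets_PiM_lborel:
  fixes c :: "nat \<Rightarrow> real"
  assumes "finite I" and "j \<in> I" and "c j \<noteq> 0"
  shows "{x \<in> space (PiM I (\<lambda>_. lborel)). (\<Sum>i\<in>I. c i * x i) = d}
     \<in> null_sets (PiM I (\<lambda>_. lborel))" (is "?H \<in> null_sets ?M")
proof -
  interpret product_sigma_finite "\<lambda>_::nat. lborel :: real measure"
    by standard
  have "(\<lambda>x. \<Sum>i\<in>I. c i * x i) \<in> borel_measurable ?M"
    by (intro borel_measurable_sum borel_measurable_times borel_measurable_const
        measurable_component_singleton) auto
  from measurable_sets[OF this, of "{d}"] have H: "?H \<in> sets ?M"
    by (simp add: vimage_def Int_def conj_commute)
  have fibre_null: "(\<integral>\<^sup>+ y. indicator ?H (z(j := y)) \<partial>lborel) = 0" for z :: "nat \<Rightarrow> real"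
  proof -
    define s where "s = (\<Sum>i\<in>I - {j}. c i * z i)"
    have "(\<Sum>i\<in>I - {j}. c i * (z(j := y)) i) = s" for y
      unfolding s_def by (rule sum.cong) auto
    then have sum_fibre: "(\<Sum>i\<in>I. c i * (z(j := y)) i) = c j * y + s" for y
      by (simp add: sum.remove[OF assms(1,2)])
    have "AE y in lborel. indicator ?H (z(j := y)) = (0::ennreal)"
    proof (rule AE_mp[OF AE_lborel_singleton[of "(d - s) / c j"]], intro AE_I2 impI)
      fix y :: real assume "y \<noteq> (d - s) / c j"
      with assms(3) have "c j * y + s \<noteq> d" by (auto simp: field_simps)
      then show "indicator ?H (z(j := y)) = (0::ennreal)"
        using sum_fibre[of y] by (simp add: indicator_def del: fun_upd_apply)
    qed
    then show ?thesis by (subst nn_integral_cong_AE[where v="\<lambda>_. 0"]) auto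
  qed
  have M: "?M = PiM (insert j (I - {j})) (\<lambda>_. lborel)"
    by (simp only: insert_Diff[OF assms(2)])
  have "emeasure ?M ?H = (\<integral>\<^sup>+ x. indicator ?H x \<partial>?M)"
    using H by simp
  also have "\<dots> = (\<integral>\<^sup>+ x. (\<integral>\<^sup>+ y. indicator ?H (x(j := y)) \<partial>lborel) \<partial>PiM (I - {j}) (\<lambda>_. lborel))"
    unfolding M using H assms(1) by (intro product_nn_integral_insert) (auto simp flip: M)
  also have "\<dots> = 0" by (simp only: fibre_null) simp
  finally show ?thesis using H by auto
qed

lemma Phi_eq_linear_form:
  assumes "1 \<le> a + b"
  shows "Phi a b x = (\<Sum>i<a + b. (if i = a + b - 1 then real b - 1 else -1) * x i)"
proof -
  have n: "{..<a + b} = insert (a + b - 1) {..<a + b - 1}"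
    using assms by auto
  show ?thesis
    unfolding Phi_def by (subst (1 2) n) (auto simp: sum_negf algebra_simps)
qed

theorem lemma4p5:
  fixes a b :: nat
  assumes "a \<ge> 1" and "b \<ge> 2"
  shows "AE x in PiM {..<a+b} (\<lambda>_. lborel).
           x \<in> A_set a b \<longrightarrow>
           (\<exists>L. (\<forall>i<a+b. (\<lambda>k. (T a b ^^ k) x i) \<longlonglongrightarrow> L i) \<and>
                (\<exists>i<a+b. L i \<noteq> 0))"
proof (rule AE_I')
  let ?M = "PiM {..<a + b} (\<lambda>_. lborel)"
  let ?c = "\<lambda>i. if i = a + b - 1 then real b - 1 else -1"
  have "{x \<in> space ?M. Phi a b x = 0} = {x \<in> space ?M. (\<Sum>i<a + b. ?c i * x i) = 0}"
    using assms by (simp add: Phi_eq_linear_form)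
  also have "\<dots> \<in> null_sets ?M"
    using assms by (intro hyperplane_null_sets_PiM_lborel) auto
  finally show "{x \<in> space ?M. Phi a b x = 0} \<in> null_sets ?M" .
  show "{x \<in> space ?M. \<not> (x \<in> A_set a b \<longrightarrow>
           (\<exists>L. (\<forall>i<a+b. (\<lambda>k. (T a b ^^ k) x i) \<longlonglongrightarrow> L i) \<and> (\<exists>i<a+b. L i \<noteq> 0)))}
        \<subseteq> {x \<in> space ?M. Phi a b x = 0}"
  proof safe
    fix x assume x: "x \<in> A_set a b"
      and no_limit: "\<nexists>L. (\<forall>i<a+b. (\<lambda>k. (T a b ^^ k) x i) \<longlonglongrightarrow> L i) \<and> (\<exists>i<a+b. L i \<noteq> 0)"
    then have "x \<in> Lambda (a + b)" and "0 \<le> Phi a b x"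
      by (auto simp: A_set_iff_Phi_nonneg)
    then obtain L where L: "\<And>i. i < a + b \<Longrightarrow> (\<lambda>k. (T a b ^^ k) x i) \<longlonglongrightarrow> L i"
      using orbit_converges assms(1) by blast
    with no_limit assms orbit_limit_nonzero[of a b x L] have "\<not> 0 < Phi a b x"
      by auto
    with \<open>0 \<le> Phi a b x\<close> show "Phi a b x = 0" by simp
  qed
qed

end
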